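(* $R_4(VS)=58$: there is a 4-coloring of $[57]$ in which no two integers of the same color differ by a positive perfect square, and every 4-coloring of $[58]$ contains integers $a<b$ of the same color with $b-a$ a positive perfect square.
   Context: For $n\in\mathbb{N}$, $[n]=\{1,\dots,n\}$; a $c$-coloring of $[n]$ is a function $[n]\to[c]$. $R_c(VS)$ (the van der Square number) is the least positive integer $n$ such that every $c$-coloring of $[n]$ contains integers $a<b$ in $[n]$ of the same color with $b-a=x^2$ for some positive integer $x$. *)

theory Defs
  imports Main
begin

definition has_mono_square_diff :: "nat \<Rightarrow> (nat \<Rightarrow> nat) \<Rightarrow> bool" where
  "has_mono_square_diff n f \<longleftrightarrow>
     (\<exists>a b x. 1 \<le> a \<and> a < b \<and> b \<le> n \<and> f a = f b \<and> x > 0 \<and> b - a = x^2)"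

definition coloring :: "nat \<Rightarrow> nat \<Rightarrow> (nat \<Rightarrow> nat) \<Rightarrow> bool" where
  "coloring c n f \<longleftrightarrow> (\<forall>i\<in>{1..n}. f i \<in> {1..c})"

definition vds_number :: "nat \<Rightarrow> nat" where
  "vds_number c = (LEAST n. n > 0 \<and> (\<forall>f. coloring c n f \<longrightarrow> has_mono_square_diff n f))"

end

theory Submission
  imports Defs
begin

text \<open>The lower bound is an explicit colouring of [57]. For the upper bound, avoiding a
  monochromatic square difference is a finite propositional condition on the atoms
  \<open>f v = k\<close>: every vertex takes one of the colours, and no colour appears at both ends of
  an edge \<open>(a, a + x\<^sup>2)\<close>. For four colours on [58] this clause set is unsatisfiable, which the
  SAT solver certifies; the explicit colouring is checked by evaluating the same condition.\<close>

lemma coloring_mono: "coloring c n f \<Longrightarrow> m \<le> n \<Longrightarrow> coloring c m f"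
  unfolding coloring_def by auto

lemma has_mono_square_diff_mono:
  "has_mono_square_diff m f \<Longrightarrow> m \<le> n \<Longrightarrow> has_mono_square_diff n f"
  unfolding has_mono_square_diff_def by (meson order_trans)

lemma vds_number_eqI:
  assumes avoiding: "coloring c m g" "\<not> has_mono_square_diff m g"
    and forced: "\<And>f. coloring c (Suc m) f \<Longrightarrow> has_mono_square_diff (Suc m) f"
  shows "vds_number c = Suc m"
  unfolding vds_number_def
proof (rule Least_equality)
  show "Suc m > 0 \<and> (\<forall>f. coloring c (Suc m) f \<longrightarrow> has_mono_square_diff (Suc m) f)"
    using forced by blast
next
  fix n assume "n > 0 \<and> (\<forall>f. coloring c n f \<longrightarrow> has_mono_square_diff n f)"
  then show "Suc m \<le> n"
    using avoiding coloring_mono has_mono_square_diff_mono by (meson not_less_eq_eq)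
qed

lemma avoiding_coloring_iff:
  "coloring c n f \<and> \<not> has_mono_square_diff n f \<longleftrightarrow>
     list_all (\<lambda>v. list_ex (\<lambda>k. f v = k) [1..<c + 1]) [1..<n + 1] \<and>
     list_all (\<lambda>x. list_all (\<lambda>a. list_all (\<lambda>k. \<not> (f a = k \<and> f (a + x^2) = k))
       [1..<c + 1]) [1..<n + 1 - x^2]) [1..<n]"
  (is "?lhs \<longleftrightarrow> ?vertices \<and> ?edges")
proof -
  have closed_range: "set [1..<k + 1] = {1..k}" for k :: nat
    by auto
  have start_range: "a \<in> set [1..<n + 1 - x^2] \<longleftrightarrow> 1 \<le> a \<and> a + x^2 \<le> n" for a x :: nat
    by auto
  have "coloring c n f \<longleftrightarrow> ?vertices"
    unfolding coloring_def list_all_iff list_ex_iff closed_range by blast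
  moreover have "\<not> has_mono_square_diff n f \<longleftrightarrow> ?edges" if "coloring c n f"
  proof
    assume avoids: "\<not> has_mono_square_diff n f"
    show ?edges
      unfolding list_all_iff
    proof (intro ballI notI)
      fix x a k
      assume "x \<in> set [1..<n]" "a \<in> set [1..<n + 1 - x^2]" "f a = k \<and> f (a + x^2) = k"
      then have "has_mono_square_diff n f"
        unfolding has_mono_square_diff_def start_range
        by (intro exI[of _ a] exI[of _ "a + x^2"] exI[of _ x]) auto
      with avoids show False ..
    qed
  next
    assume ?edges
    show "\<not> has_mono_square_diff n f"
    proof
      assume "has_mono_square_diff n f"
      then obtain a b x where "1 \<le> a" "a < b" "b \<le> n" "f a = f b" "0 < x" "b - a = x^2"
        unfolding has_mono_square_diff_def by blast
      have "x \<in> set [1..<n]"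
        using self_le_power[of x 2] \<open>0 < x\<close> \<open>b - a = x^2\<close> \<open>1 \<le> a\<close> \<open>b \<le> n\<close> by auto
      moreover have "a \<in> set [1..<n + 1 - x^2]"
        using start_range \<open>a < b\<close> \<open>b \<le> n\<close> \<open>b - a = x^2\<close> \<open>1 \<le> a\<close> by auto
      moreover have "f a \<in> set [1..<c + 1]"
        using that \<open>1 \<le> a\<close> \<open>a < b\<close> \<open>b \<le> n\<close> unfolding coloring_def closed_range by simp
      ultimately have "f (a + x^2) \<noteq> f a"
        using \<open>?edges\<close> unfolding list_all_iff by blast
      moreover have "a + x^2 = b"
        using \<open>a < b\<close> \<open>b - a = x^2\<close> by simp
      ultimately show False
        using \<open>f a = f b\<close> by simp
    qed
  qed
  ultimately show ?thesis by blast
qed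

definition witness_57 :: "nat \<Rightarrow> nat" where
  "witness_57 v = [3, 1, 4, 2, 1, 3, 1, 4, 3, 1, 2, 1, 4, 3, 1, 2, 1, 2, 3, 1, 2, 1, 2, 3, 4, 2, 4, 2,
    3, 4, 2, 4, 2, 1, 4, 3, 4, 2, 1, 4, 3, 4, 3, 1, 2, 3, 4, 3, 1, 2, 3, 1, 3, 4, 2, 3, 1] ! (v - 1)"

lemma witness_57_avoids: "coloring 4 57 witness_57 \<and> \<not> has_mono_square_diff 57 witness_57"
  unfolding avoiding_coloring_iff witness_57_def by code_simp

lemma four_coloring_58_has_mono_square_diff:
  assumes "coloring 4 58 f"
  shows "has_mono_square_diff 58 f"
proof (rule ccontr)
  assume "\<not> has_mono_square_diff 58 f"
  with assms avoiding_coloring_iff[of 4 58 f]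
  have "list_all (\<lambda>v. list_ex (\<lambda>k. f v = k) [1..<5]) [1..<59] \<and>
     list_all (\<lambda>x. list_all (\<lambda>a. list_all (\<lambda>k. \<not> (f a = k \<and> f (a + x^2) = k))
       [1..<5]) [1..<59 - x^2]) [1..<58]"
    by simp
  \<comment> \<open>The simplifier normalises \<open>1\<close> to \<open>Suc 0\<close>; folding \<open>Suc (Suc 0)\<close> back to \<open>2\<close> keeps the
    vertices as numerals while the ranges are unrolled.\<close>
  then show False
    by (simp (no_asm_use) add: upt_conv_Cons numeral_2_eq_2[symmetric]) sat
qed

theorem mainTheorem5:
  shows "vds_number 4 = 58
         \<and> (\<exists>f. coloring 4 57 f \<and> \<not> has_mono_square_diff 57 f)
         \<and> (\<forall>f. coloring 4 58 f \<longrightarrow> has_mono_square_diff 58 f)"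
  using vds_number_eqI[of 4 57 witness_57] witness_57_avoids four_coloring_58_has_mono_square_diff
  by auto

end
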